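(* Every (fork, co-dart)-free graph $G$ satisfies $\chi(G)\le\binom{\omega(G)+1}{2}$.
   Context: All graphs are finite and simple; $\chi$ is chromatic number, $\omega$ clique number. The fork is obtained from $K_{1,3}$ by subdividing one edge once. The co-dart is the disjoint union of a paw (a triangle with a pendant vertex) and an isolated vertex. $G$ is $(H_1,H_2)$-free if it has no induced subgraph isomorphic to $H_1$ or $H_2$. *)

theory Defs
  imports Main
begin

text \<open>A finite simple graph: finite vertex set V, symmetric irreflexive adjacency E
  (only its restriction to V matters).\<close>
definition simple_graph :: "'a set \<Rightarrow> ('a \<Rightarrow> 'a \<Rightarrow> bool) \<Rightarrow> bool" where
  "simple_graph V E \<longleftrightarrow> finite V \<and> (\<forall>x\<in>V. \<forall>y\<in>V. E x y \<longleftrightarrow> E y x) \<and> (\<forall>x\<in>V. \<not> E x x)"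

definition has_induced :: "'a set \<Rightarrow> ('a \<Rightarrow> 'a \<Rightarrow> bool) \<Rightarrow> nat \<Rightarrow> (nat \<Rightarrow> nat \<Rightarrow> bool) \<Rightarrow> bool" where
  "has_induced V E k HE \<longleftrightarrow>
     (\<exists>f. inj_on f {0..<k} \<and> f ` {0..<k} \<subseteq> V \<and>
          (\<forall>i<k. \<forall>j<k. E (f i) (f j) \<longleftrightarrow> HE i j))"

text \<open>Fork: K_{1,3} with centre 0 and leaves 1,2,4, where the edge 0-4 is subdivided
  by vertex 3; edges 0-1, 0-2, 0-3, 3-4.\<close>
definition fork_adj :: "nat \<Rightarrow> nat \<Rightarrow> bool" where
  "fork_adj i j \<longleftrightarrow> {i, j} \<in> {{0,1}, {0,2}, {0,3}, {3,4}}"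

text \<open>Co-dart: paw (triangle 0,1,2 with pendant 3 attached to 0) plus isolated vertex 4.\<close>
definition codart_adj :: "nat \<Rightarrow> nat \<Rightarrow> bool" where
  "codart_adj i j \<longleftrightarrow> {i, j} \<in> {{0,1}, {0,2}, {1,2}, {0,3}}"

definition proper_colouring :: "'a set \<Rightarrow> ('a \<Rightarrow> 'a \<Rightarrow> bool) \<Rightarrow> nat \<Rightarrow> ('a \<Rightarrow> nat) \<Rightarrow> bool" where
  "proper_colouring V E k c \<longleftrightarrow> c ` V \<subseteq> {..<k} \<and> (\<forall>x\<in>V. \<forall>y\<in>V. E x y \<longrightarrow> c x \<noteq> c y)"

definition chromatic_number :: "'a set \<Rightarrow> ('a \<Rightarrow> 'a \<Rightarrow> bool) \<Rightarrow> nat" where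
  "chromatic_number V E = (LEAST k. \<exists>c. proper_colouring V E k c)"

definition is_clique :: "'a set \<Rightarrow> ('a \<Rightarrow> 'a \<Rightarrow> bool) \<Rightarrow> 'a set \<Rightarrow> bool" where
  "is_clique V E K \<longleftrightarrow> K \<subseteq> V \<and> (\<forall>x\<in>K. \<forall>y\<in>K. x \<noteq> y \<longrightarrow> E x y)"

definition clique_number :: "'a set \<Rightarrow> ('a \<Rightarrow> 'a \<Rightarrow> bool) \<Rightarrow> nat" where
  "clique_number V E = Max (card ` {K. is_clique V E K})"

end

theory Submission
  imports Defs
begin

text \<open>Induction on the clique number \<open>\<omega>\<close>. For a vertex \<open>v\<close>, the neighbourhood of \<open>v\<close> has clique number
  below \<open>\<omega>\<close>, so by induction it needs at most \<open>\<omega> choose 2\<close> colours; \<open>v\<close> together with its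
  non-neighbourhood needs at most \<open>\<omega>\<close> further colours, because co-dart-freeness makes the
  non-neighbourhood paw-free. In a paw-free graph the vertices lying in triangles split into
  complete multipartite pieces with no edges between them or to the rest (Olariu), which take
  \<open>\<omega>\<close> colours, while the remaining vertices induce a triangle-free fork-free graph. Such a graph
  is 3-colourable: around a vertex of degree at least 3, the ball of radius 3 is bipartite and no
  edge leaves it. The same fact settles \<open>\<omega> = 2\<close>.\<close>

definition colourable :: "'a set \<Rightarrow> ('a \<Rightarrow> 'a \<Rightarrow> bool) \<Rightarrow> nat \<Rightarrow> bool" where
  "colourable W E k \<longleftrightarrow> (\<exists>c. proper_colouring W E k c)"

definition clique_bounded :: "'a set \<Rightarrow> ('a \<Rightarrow> 'a \<Rightarrow> bool) \<Rightarrow> nat \<Rightarrow> bool" where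
  "clique_bounded W E k \<longleftrightarrow> (\<forall>K. is_clique W E K \<longrightarrow> card K \<le> k)"

definition neighbours :: "'a set \<Rightarrow> ('a \<Rightarrow> 'a \<Rightarrow> bool) \<Rightarrow> 'a \<Rightarrow> 'a set" where
  "neighbours W E v = {y\<in>W. E v y}"

definition non_neighbours :: "'a set \<Rightarrow> ('a \<Rightarrow> 'a \<Rightarrow> bool) \<Rightarrow> 'a \<Rightarrow> 'a set" where
  "non_neighbours W E v = {y\<in>W. y \<noteq> v \<and> \<not> E v y}"

definition second_neighbours :: "'a set \<Rightarrow> ('a \<Rightarrow> 'a \<Rightarrow> bool) \<Rightarrow> 'a \<Rightarrow> 'a set" where
  "second_neighbours W E u =
     {y\<in>W. y \<noteq> u \<and> y \<notin> neighbours W E u \<and> (\<exists>x\<in>neighbours W E u. E x y)}"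

definition third_neighbours :: "'a set \<Rightarrow> ('a \<Rightarrow> 'a \<Rightarrow> bool) \<Rightarrow> 'a \<Rightarrow> 'a set" where
  "third_neighbours W E u =
     {z\<in>W. z \<noteq> u \<and> z \<notin> neighbours W E u \<and> z \<notin> second_neighbours W E u \<and>
        (\<exists>y\<in>second_neighbours W E u. E y z)}"

definition no_edges_leaving :: "'a set \<Rightarrow> ('a \<Rightarrow> 'a \<Rightarrow> bool) \<Rightarrow> 'a set \<Rightarrow> bool" where
  "no_edges_leaving W E C \<longleftrightarrow> (\<forall>x\<in>C. \<forall>s\<in>W - C. \<not> E x s)"

definition triangle_free :: "'a set \<Rightarrow> ('a \<Rightarrow> 'a \<Rightarrow> bool) \<Rightarrow> bool" where
  "triangle_free W E \<longleftrightarrow> (\<forall>a\<in>W. \<forall>b\<in>W. \<forall>c\<in>W. E a b \<longrightarrow> E a c \<longrightarrow> \<not> E b c)"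

abbreviation fork_free :: "'a set \<Rightarrow> ('a \<Rightarrow> 'a \<Rightarrow> bool) \<Rightarrow> bool" where
  "fork_free W E \<equiv> \<not> has_induced W E 5 fork_adj"

text \<open>The co-dart restricted to the vertices \<open>{0..<4}\<close> is the paw.\<close>
abbreviation paw_free :: "'a set \<Rightarrow> ('a \<Rightarrow> 'a \<Rightarrow> bool) \<Rightarrow> bool" where
  "paw_free W E \<equiv> \<not> has_induced W E 4 codart_adj"

lemma simple_graph_subset: "simple_graph W E \<Longrightarrow> U \<subseteq> W \<Longrightarrow> simple_graph U E"
  unfolding simple_graph_def by (meson finite_subset subsetD)

lemma simple_graph_sym: "simple_graph W E \<Longrightarrow> x \<in> W \<Longrightarrow> y \<in> W \<Longrightarrow> E x y \<Longrightarrow> E y x"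
  unfolding simple_graph_def by blast

lemma simple_graph_irrefl: "simple_graph W E \<Longrightarrow> x \<in> W \<Longrightarrow> \<not> E x x"
  unfolding simple_graph_def by blast

lemma non_neighbours_mono: "U \<subseteq> W \<Longrightarrow> non_neighbours U E v \<subseteq> non_neighbours W E v"
  unfolding non_neighbours_def by blast

lemma has_induced_mono: "has_induced U E k H \<Longrightarrow> U \<subseteq> W \<Longrightarrow> has_induced W E k H"
  unfolding has_induced_def by (meson order_trans)

lemma has_induced_if_list:
  assumes "distinct xs" "set xs \<subseteq> W"
    and "\<And>i j. i < length xs \<Longrightarrow> j < length xs \<Longrightarrow> E (xs ! i) (xs ! j) \<longleftrightarrow> H i j"
  shows "has_induced W E (length xs) H"
  unfolding has_induced_def
proof (intro exI conjI)
  show "inj_on (nth xs) {0..<length xs}" using assms(1) by (simp add: inj_on_nth)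
  show "nth xs ` {0..<length xs} \<subseteq> W" using assms(2) nth_mem by fastforce
  show "\<forall>i<length xs. \<forall>j<length xs. E (xs ! i) (xs ! j) \<longleftrightarrow> H i j"
    using assms(3) by blast
qed

lemma fork_freeD:
  assumes "fork_free W E" "simple_graph W E"
    and "x0 \<in> W" "x1 \<in> W" "x2 \<in> W" "x3 \<in> W" "x4 \<in> W" "distinct [x0, x1, x2, x3, x4]"
    and "E x0 x1" "E x0 x2" "E x0 x3" "E x3 x4"
  shows "E x1 x2 \<or> E x1 x3 \<or> E x1 x4 \<or> E x2 x3 \<or> E x2 x4 \<or> E x0 x4"
proof (rule ccontr)
  assume none: "\<not> ?thesis"
  have adj: "E x1 x0" "E x2 x0" "E x3 x0" "E x4 x3" "\<not> E x2 x1" "\<not> E x3 x1" "\<not> E x4 x1"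
    "\<not> E x3 x2" "\<not> E x4 x2" "\<not> E x4 x0"
    "\<not> E x0 x0" "\<not> E x1 x1" "\<not> E x2 x2" "\<not> E x3 x3" "\<not> E x4 x4"
    using assms(3-7,9-12) none simple_graph_sym[OF assms(2)] simple_graph_irrefl[OF assms(2)]
    by blast+
  have "has_induced W E (length [x0, x1, x2, x3, x4]) fork_adj"
  proof (rule has_induced_if_list)
    fix i j assume "i < length [x0, x1, x2, x3, x4]" "j < length [x0, x1, x2, x3, x4]"
    then have "i = 0 \<or> i = 1 \<or> i = 2 \<or> i = 3 \<or> i = 4" "j = 0 \<or> j = 1 \<or> j = 2 \<or> j = 3 \<or> j = 4" by auto
    then show "E ([x0, x1, x2, x3, x4] ! i) ([x0, x1, x2, x3, x4] ! j) \<longleftrightarrow> fork_adj i j"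
      using assms(9-12) none adj unfolding fork_adj_def by (elim disjE) (simp_all add: doubleton_eq_iff)
  qed (use assms(3-8) in auto)
  then show False using assms(1) by (simp add: numeral_eq_Suc)
qed

lemma paw_freeD:
  assumes "paw_free W E" "simple_graph W E"
    and "a \<in> W" "b \<in> W" "c \<in> W" "d \<in> W" "E a b" "E a c" "E a d" "E b c"
  shows "E b d \<or> E c d"
proof (rule ccontr)
  assume none: "\<not> ?thesis"
  have adj: "E b a" "E c a" "E d a" "E c b" "\<not> E d b" "\<not> E d c"
    "\<not> E a a" "\<not> E b b" "\<not> E c c" "\<not> E d d"
    using assms(3-10) none simple_graph_sym[OF assms(2)] simple_graph_irrefl[OF assms(2)]
    by blast+
  have "distinct [a, b, c, d]" using assms(7-10) adj by auto
  then have "has_induced W E (length [a, b, c, d]) codart_adj"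
  proof (rule has_induced_if_list)
    fix i j assume "i < length [a, b, c, d]" "j < length [a, b, c, d]"
    then have "i = 0 \<or> i = 1 \<or> i = 2 \<or> i = 3" "j = 0 \<or> j = 1 \<or> j = 2 \<or> j = 3" by auto
    then show "E ([a, b, c, d] ! i) ([a, b, c, d] ! j) \<longleftrightarrow> codart_adj i j"
      using assms(7-10) none adj unfolding codart_adj_def by (elim disjE) (simp_all add: doubleton_eq_iff)
  qed (use assms(3-6) in auto)
  then show False using assms(1) by (simp add: numeral_eq_Suc)
qed

lemma codart_free_imp_paw_free_non_neighbours:
  assumes "simple_graph V E" "\<not> has_induced V E 5 codart_adj" "v \<in> V"
  shows "paw_free (non_neighbours V E v) E"
proof
  assume "has_induced (non_neighbours V E v) E 4 codart_adj"
  then obtain f where f: "inj_on f {0..<4}" "f ` {0..<4} \<subseteq> non_neighbours V E v"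
    and adj: "\<forall>i<4. \<forall>j<4. E (f i) (f j) \<longleftrightarrow> codart_adj i j"
    unfolding has_induced_def by blast
  have f_non_adj: "f i \<in> V" "f i \<noteq> v" "\<not> E v (f i)" "\<not> E (f i) v" if "i < 4" for i
  proof -
    have "f i \<in> non_neighbours V E v" using f(2) that by auto
    then show "f i \<in> V" "f i \<noteq> v" "\<not> E v (f i)" "\<not> E (f i) v"
      using simple_graph_sym[OF assms(1) _ assms(3)] unfolding non_neighbours_def by auto
  qed
  have isolated: "\<not> codart_adj 4 i" "\<not> codart_adj i 4" for i
    by (auto simp: codart_adj_def doubleton_eq_iff)
  \<comment> \<open>Adding \<open>v\<close> as the isolated vertex \<open>4\<close> turns the paw into a co-dart.\<close>
  have "has_induced V E 5 codart_adj"
    unfolding has_induced_def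
  proof (intro exI conjI allI impI)
    show "inj_on (f(4 := v)) {0..<5}"
      using f(1) f_non_adj(2) f_non_adj(2)[symmetric] by (auto simp: inj_on_def less_Suc_eq)
    show "(f(4 := v)) ` {0..<5} \<subseteq> V"
      using f_non_adj(1) assms(3) by (auto simp: less_Suc_eq)
    fix i j :: nat assume "i < 5" "j < 5"
    then show "E ((f(4 := v)) i) ((f(4 := v)) j) \<longleftrightarrow> codart_adj i j"
      using adj f_non_adj(3,4) isolated simple_graph_irrefl[OF assms(1,3)]
      by (auto simp: less_Suc_eq)
  qed
  then show False using assms(2) by blast
qed

lemma colourable_empty: "colourable {} E k"
  unfolding colourable_def proper_colouring_def by blast

lemma colourable_mono: "colourable W E k \<Longrightarrow> k \<le> k' \<Longrightarrow> colourable W E k'"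
  unfolding colourable_def proper_colouring_def by (meson lessThan_subset_iff order_trans)

lemma colourable_independent: "\<forall>x\<in>W. \<forall>y\<in>W. \<not> E x y \<Longrightarrow> 0 < k \<Longrightarrow> colourable W E k"
  unfolding colourable_def proper_colouring_def by (intro exI[of _ "\<lambda>_. 0"]) auto

lemma colourable_Un:
  assumes "colourable A E k" "colourable B E l"
  shows "colourable (A \<union> B) E (k + l)"
proof -
  obtain c d where c: "proper_colouring A E k c" and d: "proper_colouring B E l d"
    using assms unfolding colourable_def by blast
  have "proper_colouring (A \<union> B) E (k + l) (\<lambda>x. if x \<in> A then c x else k + d x)"
    using c d unfolding proper_colouring_def by (auto simp: image_subset_iff)
  then show ?thesis unfolding colourable_def by blast
qed

lemma colourable_Diff_no_edges_leaving:
  assumes "simple_graph W E" "C \<subseteq> W" "no_edges_leaving W E C"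
    and "colourable C E k" "colourable (W - C) E k"
  shows "colourable W E k"
proof -
  obtain c d where c: "proper_colouring C E k c" and d: "proper_colouring (W - C) E k d"
    using assms(4,5) unfolding colourable_def by blast
  have no_edge: "\<not> E x y" "\<not> E y x" if "x \<in> C" "y \<in> W - C" for x y
    using assms(3) that simple_graph_sym[OF assms(1), of y x] assms(2)
    unfolding no_edges_leaving_def by blast+
  have "proper_colouring W E k (\<lambda>x. if x \<in> C then c x else d x)"
    using c d no_edge unfolding proper_colouring_def by (auto simp: image_subset_iff)
  then show ?thesis unfolding colourable_def by blast
qed

lemma colourable_insert:
  assumes "simple_graph W E" "u \<in> W" "card (neighbours W E u) < k"
    and "colourable (W - {u}) E k"
  shows "colourable W E k"
proof -
  obtain c where c: "proper_colouring (W - {u}) E k c"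
    using assms(4) unfolding colourable_def by blast
  have fin: "finite (neighbours W E u)"
    using assms(1) unfolding simple_graph_def neighbours_def by simp
  then have "card (c ` neighbours W E u) < card {..<k}"
    using card_image_le[of "neighbours W E u" c] assms(3) by simp
  then have "\<not> {..<k} \<subseteq> c ` neighbours W E u"
    using card_mono[OF finite_imageI[OF fin]] by fastforce
  then obtain m where m: "m < k" "m \<notin> c ` neighbours W E u" by auto
  have "proper_colouring W E k (c(u := m))"
    unfolding proper_colouring_def
  proof (intro conjI ballI impI)
    show "(c(u := m)) ` W \<subseteq> {..<k}" using c m unfolding proper_colouring_def by auto
  next
    fix x y assume xy: "x \<in> W" "y \<in> W" "E x y"
    then have "x \<noteq> y" using simple_graph_irrefl[OF assms(1)] by blast
    moreover have "x = u \<Longrightarrow> y \<in> neighbours W E u" "y = u \<Longrightarrow> x \<in> neighbours W E u"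
      using xy simple_graph_sym[OF assms(1)] unfolding neighbours_def by auto
    ultimately show "(c(u := m)) x \<noteq> (c(u := m)) y"
      using c m xy unfolding proper_colouring_def by auto
  qed
  then show ?thesis unfolding colourable_def by blast
qed

lemma colourable_neighbours_Un_non_neighbours:
  assumes sg: "simple_graph W E" and v: "v \<in> W"
    and "colourable (neighbours W E v) E k" "colourable (non_neighbours W E v) E l" "0 < l"
  shows "colourable W E (k + l)"
proof -
  let ?M = "non_neighbours W E v"
  have "colourable (insert v ?M) E l"
  proof (rule colourable_Diff_no_edges_leaving[of _ _ "{v}"])
    show "simple_graph (insert v ?M) E"
      by (rule simple_graph_subset[OF sg]) (use v in \<open>auto simp: non_neighbours_def\<close>)
    show "no_edges_leaving (insert v ?M) E {v}"
      unfolding no_edges_leaving_def non_neighbours_def by auto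
    show "colourable {v} E l"
      using simple_graph_irrefl[OF sg v] \<open>0 < l\<close> by (intro colourable_independent) auto
    show "colourable (insert v ?M - {v}) E l"
      using assms(4) by (simp add: non_neighbours_def)
  qed simp
  with assms(3) have "colourable (neighbours W E v \<union> insert v ?M) E (k + l)" by (rule colourable_Un)
  moreover have "neighbours W E v \<union> insert v ?M = W"
    using v unfolding neighbours_def non_neighbours_def by auto
  ultimately show ?thesis by simp
qed

lemma clique_bounded_subset: "clique_bounded W E k \<Longrightarrow> U \<subseteq> W \<Longrightarrow> clique_bounded U E k"
  unfolding clique_bounded_def is_clique_def by blast

lemma clique_bounded_0_empty:
  assumes "clique_bounded W E 0" shows "W = {}"
proof (rule ccontr)
  assume "W \<noteq> {}"
  then obtain x where "is_clique W E {x}" unfolding is_clique_def by blast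
  then show False using assms unfolding clique_bounded_def by fastforce
qed

lemma clique_bounded_neighbours:
  assumes "simple_graph W E" "clique_bounded W E (Suc k)" "u \<in> W"
  shows "clique_bounded (neighbours W E u) E k"
  unfolding clique_bounded_def
proof (intro allI impI)
  fix K assume K: "is_clique (neighbours W E u) E K"
  have "u \<notin> K" "finite K"
    using K assms(1) simple_graph_irrefl[OF assms(1,3)]
    unfolding is_clique_def neighbours_def simple_graph_def by (auto intro: finite_subset)
  moreover have "is_clique W E (insert u K)"
    using K assms(3) simple_graph_sym[OF assms(1)]
    unfolding is_clique_def neighbours_def by auto
  ultimately show "card K \<le> k"
    using assms(2) unfolding clique_bounded_def by fastforce
qed

lemma clique_bounded_edge:
  assumes "simple_graph W E" "clique_bounded W E k" "x \<in> W" "y \<in> W" "E x y"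
  shows "2 \<le> k"
proof -
  have "is_clique W E {x, y}"
    using assms(3-5) simple_graph_sym[OF assms(1,3-5)] unfolding is_clique_def by auto
  moreover have "x \<noteq> y" using assms(5) simple_graph_irrefl[OF assms(1,3)] by blast
  ultimately show ?thesis using assms(2) unfolding clique_bounded_def by fastforce
qed

lemma clique_bounded_triangle:
  assumes "simple_graph W E" "clique_bounded W E k"
    and "x \<in> W" "y \<in> W" "z \<in> W" "E x y" "E x z" "E y z"
  shows "3 \<le> k"
proof -
  have "is_clique W E {x, y, z}"
    using assms(3-8) simple_graph_sym[OF assms(1,3,4,6)] simple_graph_sym[OF assms(1,3,5,7)]
      simple_graph_sym[OF assms(1,4,5,8)]
    unfolding is_clique_def by auto
  moreover have "x \<noteq> y" "x \<noteq> z" "y \<noteq> z"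
    using assms(6-8) simple_graph_irrefl[OF assms(1)] assms(3,4) by blast+
  ultimately show ?thesis using assms(2) unfolding clique_bounded_def by fastforce
qed

text \<open>The hypothesis excludes an induced \<open>K\<^sub>1 + K\<^sub>2\<close>, i.e. the graph is complete multipartite;
  the non-neighbours of a vertex then form a colour class.\<close>
lemma colourable_if_vertices_dominate_edges:
  assumes "simple_graph W E" "clique_bounded W E k"
    and "\<And>a b c. a \<in> W \<Longrightarrow> b \<in> W \<Longrightarrow> c \<in> W \<Longrightarrow> E b c \<Longrightarrow> a = b \<or> a = c \<or> E a b \<or> E a c"
  shows "colourable W E k"
  using assms
proof (induction k arbitrary: W)
  case 0
  then show ?case using clique_bounded_0_empty colourable_empty by metis
next
  case (Suc k)
  show ?case
  proof (cases "W = {}")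
    case True
    then show ?thesis using colourable_empty by simp
  next
    case False
    then obtain a where a: "a \<in> W" by blast
    have "colourable (neighbours W E a) E k"
    proof (rule Suc.IH)
      show "simple_graph (neighbours W E a) E" "clique_bounded (neighbours W E a) E k"
        using Suc.prems(1,2) a simple_graph_subset clique_bounded_neighbours
        unfolding neighbours_def by fastforce+
    qed (use Suc.prems(3) in \<open>auto simp: neighbours_def\<close>)
    moreover have "colourable (W - neighbours W E a) E 1"
    proof (rule colourable_independent)
      show "\<forall>x\<in>W - neighbours W E a. \<forall>y\<in>W - neighbours W E a. \<not> E x y"
        using Suc.prems(3)[OF a] simple_graph_sym[OF Suc.prems(1)] simple_graph_irrefl[OF Suc.prems(1)]
        unfolding neighbours_def by blast
    qed simp
    ultimately have "colourable (neighbours W E a \<union> (W - neighbours W E a)) E (k + 1)"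
      by (rule colourable_Un)
    then show ?thesis by (simp add: Un_absorb1 neighbours_def)
  qed
qed

lemma triangle_freeD:
  "triangle_free W E \<Longrightarrow> a \<in> W \<Longrightarrow> b \<in> W \<Longrightarrow> c \<in> W \<Longrightarrow> E a b \<Longrightarrow> E a c \<Longrightarrow> \<not> E b c"
  unfolding triangle_free_def by blast

lemma triangle_free_subset: "triangle_free W E \<Longrightarrow> U \<subseteq> W \<Longrightarrow> triangle_free U E"
  unfolding triangle_free_def by blast

lemma triangle_free_if_clique_bounded_2:
  assumes "simple_graph W E" "clique_bounded W E 2"
  shows "triangle_free W E"
  unfolding triangle_free_def
proof (intro ballI impI notI)
  fix a b c assume "a \<in> W" "b \<in> W" "c \<in> W" "E a b" "E a c" "E b c"
  from clique_bounded_triangle[OF assms this] show False by simp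
qed

lemma card_ge_3_obtains:
  assumes "3 \<le> card A"
  obtains p q r where "p \<in> A" "q \<in> A" "r \<in> A" "p \<noteq> q" "p \<noteq> r" "q \<noteq> r"
proof -
  obtain S where "S \<subseteq> A" "card S = 3" using obtain_subset_with_card_n assms by metis
  then show ?thesis using that by (auto simp: card_3_iff)
qed

lemma second_neighbour_adj_one_of_two:
  assumes sg: "simple_graph W E" and ff: "fork_free W E" and tf: "triangle_free W E"
    and u: "u \<in> W" and y: "y \<in> second_neighbours W E u"
    and bc: "b \<in> neighbours W E u" "c \<in> neighbours W E u" "b \<noteq> c"
  shows "E y b \<or> E y c"
proof -
  obtain a where a: "a \<in> W" "E u a" "E a y" and yW: "y \<in> W" "y \<noteq> u" "\<not> E u y"
    using y unfolding second_neighbours_def neighbours_def by blast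
  have bcW: "b \<in> W" "c \<in> W" "E u b" "E u c" using bc unfolding neighbours_def by auto
  show ?thesis
  proof (cases "a = b \<or> a = c")
    case True
    then show ?thesis using simple_graph_sym[OF sg a(1) yW(1) a(3)] by auto
  next
    case False
    then have "distinct [u, b, c, a, y]"
      using a bcW bc(3) yW simple_graph_irrefl[OF sg u] by auto
    then have "E b c \<or> E b a \<or> E b y \<or> E c a \<or> E c y \<or> E u y"
      by (rule fork_freeD[OF ff sg u bcW(1,2) a(1) yW(1) _ bcW(3,4) a(2,3)])
    moreover have "\<not> E b c" "\<not> E b a" "\<not> E c a"
      using triangle_freeD[OF tf u bcW(1,2,3,4)] triangle_freeD[OF tf u bcW(1) a(1) bcW(3) a(2)]
        triangle_freeD[OF tf u bcW(2) a(1) bcW(4) a(2)] by blast+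
    ultimately show ?thesis
      using yW(3) simple_graph_sym[OF sg bcW(1) yW(1)] simple_graph_sym[OF sg bcW(2) yW(1)] by blast
  qed
qed

lemma second_neighbours_indep:
  assumes sg: "simple_graph W E" and ff: "fork_free W E" and tf: "triangle_free W E"
    and u: "u \<in> W" and deg: "3 \<le> card (neighbours W E u)"
    and y: "y \<in> second_neighbours W E u" and y': "y' \<in> second_neighbours W E u"
  shows "\<not> E y y'"
proof
  assume "E y y'"
  obtain p q r where pqr: "p \<in> neighbours W E u" "q \<in> neighbours W E u" "r \<in> neighbours W E u"
    "p \<noteq> q" "p \<noteq> r" "q \<noteq> r"
    using card_ge_3_obtains[OF deg] by blast
  note sees = second_neighbour_adj_one_of_two[OF sg ff tf u]
  \<comment> \<open>each of \<open>y, y'\<close> misses at most one of \<open>p, q, r\<close>, so they have a common neighbour\<close>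
  obtain s where s: "s \<in> neighbours W E u" "E y s" "E y' s"
    using sees[OF y pqr(1,2,4)] sees[OF y pqr(1,3,5)] sees[OF y pqr(2,3,6)]
      sees[OF y' pqr(1,2,4)] sees[OF y' pqr(1,3,5)] sees[OF y' pqr(2,3,6)] pqr(1-3)
    by blast
  have W: "s \<in> W" "y \<in> W" "y' \<in> W"
    using s(1) y y' unfolding neighbours_def second_neighbours_def by auto
  show False
    using triangle_freeD[OF tf W simple_graph_sym[OF sg W(2,1) s(2)] simple_graph_sym[OF sg W(3,1) s(3)]]
      \<open>E y y'\<close> by blast
qed

lemma fork_free_triangle_free_path_end_adj:
  assumes sg: "simple_graph W E" and ff: "fork_free W E" and tf: "triangle_free W E"
    and W: "y \<in> W" "a \<in> W" "b \<in> W" "z \<in> W" "w \<in> W"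
    and ya: "E y a" and yb: "E y b" and "a \<noteq> b" and yz: "E y z" and "\<not> E a z" "\<not> E b z"
    and zw: "E z w" and "w \<noteq> y"
  shows "E a w \<or> E b w"
proof (cases "z = a \<or> z = b")
  case True
  then show ?thesis using zw by blast
next
  case False
  have "w \<noteq> a" "w \<noteq> b"
    using \<open>\<not> E a z\<close> \<open>\<not> E b z\<close> zw simple_graph_sym[OF sg W(4,2)] simple_graph_sym[OF sg W(4,3)]
    by blast+
  moreover have "y \<noteq> a" "y \<noteq> b" "y \<noteq> z" "w \<noteq> z"
    using ya yb yz zw simple_graph_irrefl[OF sg W(1)] simple_graph_irrefl[OF sg W(4)] by blast+
  ultimately have "distinct [y, a, b, z, w]" using False \<open>a \<noteq> b\<close> \<open>w \<noteq> y\<close> by auto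
  then have "E a b \<or> E a z \<or> E a w \<or> E b z \<or> E b w \<or> E y w"
    by (rule fork_freeD[OF ff sg W _ ya yb yz zw])
  moreover have "\<not> E a b" "\<not> E y w"
    using triangle_freeD[OF tf W(1-3) ya yb]
      triangle_freeD[OF tf W(4,1,5) simple_graph_sym[OF sg W(1,4) yz] zw]
    by blast+
  ultimately show ?thesis using \<open>\<not> E a z\<close> \<open>\<not> E b z\<close> by blast
qed

lemma third_neighbour_adj_only_second:
  assumes sg: "simple_graph W E" and ff: "fork_free W E" and tf: "triangle_free W E"
    and u: "u \<in> W" and deg: "3 \<le> card (neighbours W E u)"
    and z: "z \<in> third_neighbours W E u" and w: "w \<in> W" "E z w"
  shows "w \<in> second_neighbours W E u"
proof -
  obtain y where y: "y \<in> second_neighbours W E u" "E y z"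
    using z unfolding third_neighbours_def by blast
  obtain p q r where pqr: "p \<in> neighbours W E u" "q \<in> neighbours W E u" "r \<in> neighbours W E u"
    "p \<noteq> q" "p \<noteq> r" "q \<noteq> r"
    using card_ge_3_obtains[OF deg] by blast
  note sees = second_neighbour_adj_one_of_two[OF sg ff tf u y(1)]
  obtain a b where ab: "a \<in> neighbours W E u" "b \<in> neighbours W E u" "a \<noteq> b" "E y a" "E y b"
    using sees[OF pqr(1,2,4)] sees[OF pqr(1,3,5)] sees[OF pqr(2,3,6)] pqr by blast
  have zW: "z \<in> W" "z \<noteq> u" "z \<notin> neighbours W E u" "z \<notin> second_neighbours W E u"
    using z unfolding third_neighbours_def by auto
  have "\<not> E a z" "\<not> E b z" using ab zW unfolding second_neighbours_def by auto
  show ?thesis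
  proof (cases "w = y")
    case False
    have "y \<in> W" "a \<in> W" "b \<in> W"
      using y(1) ab unfolding second_neighbours_def neighbours_def by auto
    then have "E a w \<or> E b w"
      using fork_free_triangle_free_path_end_adj[OF sg ff tf _ _ _ zW(1) w(1)] ab(3-5) y(2)
        \<open>\<not> E a z\<close> \<open>\<not> E b z\<close> w(2) False by blast
    moreover have "w \<noteq> u" "w \<notin> neighbours W E u"
      using zW simple_graph_sym[OF sg zW(1) w] unfolding second_neighbours_def neighbours_def by auto
    ultimately show ?thesis using ab(1,2) w(1) unfolding second_neighbours_def by blast
  qed (use y in simp)
qed

lemma fork_free_triangle_free_ball_no_edges_leaving:
  assumes sg: "simple_graph W E" and ff: "fork_free W E" and tf: "triangle_free W E"
    and u: "u \<in> W" and deg: "3 \<le> card (neighbours W E u)"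
  shows "no_edges_leaving W E
    (insert u (neighbours W E u \<union> second_neighbours W E u \<union> third_neighbours W E u))"
  unfolding no_edges_leaving_def
proof (intro ballI notI)
  fix x s
  assume x: "x \<in> insert u (neighbours W E u \<union> second_neighbours W E u \<union> third_neighbours W E u)"
    and s: "s \<in> W - insert u (neighbours W E u \<union> second_neighbours W E u \<union> third_neighbours W E u)"
    and "E x s"
  then consider "x = u" | "x \<in> neighbours W E u" | "x \<in> second_neighbours W E u"
    | "x \<in> third_neighbours W E u" by blast
  then show False
  proof cases
    case 4
    then show False
      using third_neighbour_adj_only_second[OF sg ff tf u deg 4 _ \<open>E x s\<close>] s by blast
  qed (use s \<open>E x s\<close> in \<open>auto simp: neighbours_def second_neighbours_def third_neighbours_def\<close>)
qed

lemma fork_free_triangle_free_ball_2_colourable: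
  assumes sg: "simple_graph W E" and ff: "fork_free W E" and tf: "triangle_free W E"
    and u: "u \<in> W" and deg: "3 \<le> card (neighbours W E u)"
  shows "colourable
    (insert u (neighbours W E u \<union> second_neighbours W E u \<union> third_neighbours W E u)) E 2"
proof -
  let ?N = "neighbours W E u" and ?N2 = "second_neighbours W E u" and ?N3 = "third_neighbours W E u"
  have "colourable (insert u ?N2) E 1"
  proof (rule colourable_independent)
    show "\<forall>x\<in>insert u ?N2. \<forall>y\<in>insert u ?N2. \<not> E x y"
      using second_neighbours_indep[OF sg ff tf u deg] simple_graph_irrefl[OF sg u]
        simple_graph_sym[OF sg _ u]
      unfolding second_neighbours_def neighbours_def by blast
  qed simp
  moreover have "colourable (?N \<union> ?N3) E 1"
  proof (rule colourable_independent)
    show "\<forall>x\<in>?N \<union> ?N3. \<forall>y\<in>?N \<union> ?N3. \<not> E x y"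
    proof (intro ballI notI)
      fix x y assume x: "x \<in> ?N \<union> ?N3" and y: "y \<in> ?N \<union> ?N3" and "E x y"
      show False
      proof (cases "x \<in> ?N3")
        case True
        then have "y \<in> ?N2"
          using third_neighbour_adj_only_second[OF sg ff tf u deg] y \<open>E x y\<close>
          unfolding neighbours_def third_neighbours_def by blast
        then show False using y unfolding second_neighbours_def third_neighbours_def by blast
      next
        case False
        then have "x \<in> W" "E u x" using x unfolding neighbours_def by auto
        then show False
          using y \<open>E x y\<close> triangle_freeD[OF tf u] unfolding neighbours_def third_neighbours_def second_neighbours_def
          by blast
      qed
    qed
  qed simp
  ultimately have "colourable (insert u ?N2 \<union> (?N \<union> ?N3)) E (1 + 1)" by (rule colourable_Un)
  moreover have "insert u ?N2 \<union> (?N \<union> ?N3) = insert u (?N \<union> ?N2 \<union> ?N3)" by blast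
  ultimately show ?thesis by (simp add: numeral_2_eq_2)
qed

lemma fork_free_triangle_free_3_colourable:
  assumes "simple_graph W E" "fork_free W E" "triangle_free W E"
  shows "colourable W E 3"
  using assms
proof (induction "card W" arbitrary: W rule: less_induct)
  case less
  show ?case
  proof (cases "W = {}")
    case True
    then show ?thesis by (simp add: colourable_empty)
  next
    case False
    then obtain u where u: "u \<in> W" by blast
    have colourable_rest: "colourable (W - C) E 3" if "u \<in> C" for C
    proof (rule less.hyps)
      show "card (W - C) < card W"
        using less.prems(1) u that by (intro psubset_card_mono) (auto simp: simple_graph_def)
      show "simple_graph (W - C) E" using less.prems(1) by (rule simple_graph_subset) blast
      show "fork_free (W - C) E" using less.prems(2) has_induced_mono[of "W - C"] by blast
      show "triangle_free (W - C) E" using less.prems(3) by (rule triangle_free_subset) blast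
    qed
    show ?thesis
    proof (cases "card (neighbours W E u) < 3")
      case True
      then show ?thesis by (rule colourable_insert[OF less.prems(1) u _ colourable_rest]) simp
    next
      case False
      then have deg: "3 \<le> card (neighbours W E u)" by simp
      let ?C = "insert u (neighbours W E u \<union> second_neighbours W E u \<union> third_neighbours W E u)"
      have "?C \<subseteq> W"
        using u unfolding neighbours_def second_neighbours_def third_neighbours_def by auto
      moreover have "colourable ?C E 3"
        using colourable_mono[OF fork_free_triangle_free_ball_2_colourable[OF less.prems u deg]] by simp
      ultimately show ?thesis
        using colourable_Diff_no_edges_leaving[OF less.prems(1) _
            fork_free_triangle_free_ball_no_edges_leaving[OF less.prems u deg]]
          colourable_rest[of ?C] by blast
    qed
  qed
qed

lemma paw_free_second_neighbour_adj_all: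
  assumes sg: "simple_graph W E" and pf: "paw_free W E"
    and u: "u \<in> W" and triangle: "d \<in> W" "e \<in> W" "E u d" "E u e" "E d e"
    and t: "t \<in> second_neighbours W E u" and y: "y \<in> neighbours W E u"
  shows "E y t"
proof -
  obtain x where x: "x \<in> W" "E u x" "E x t" and tW: "t \<in> W" "\<not> E u t"
    using t unfolding second_neighbours_def neighbours_def by blast
  have yW: "y \<in> W" "E u y" using y unfolding neighbours_def by auto
  have adj_t: "E v t" if "v \<in> W" "E u v" "v' \<in> W" "E u v'" "E v' t" "E v' v" for v v'
    using paw_freeD[OF pf sg that(3) u that(1) tW(1) simple_graph_sym[OF sg u that(3,4)] that(6,5) that(2)]
      tW(2) by blast
  obtain x' where x': "x' \<in> W" "E u x'" "E x x'"
  proof (cases "x = d \<or> x = e")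
    case True
    then show ?thesis
      using that triangle simple_graph_sym[OF sg triangle(1,2,5)] by blast
  next
    case False
    have "E d x \<or> E e x" by (rule paw_freeD[OF pf sg u triangle(1,2) x(1) triangle(3,4) x(2) triangle(5)])
    then show ?thesis
      using that triangle simple_graph_sym[OF sg triangle(1) x(1)] simple_graph_sym[OF sg triangle(2) x(1)]
      by blast
  qed
  have x't: "E x' t" by (rule adj_t[OF x'(1,2) x x'(3)])
  consider "E x y" | "E x' y" | "\<not> E x y" "\<not> E x' y" by blast
  then show ?thesis
  proof cases
    case 1
    then show ?thesis by (rule adj_t[OF yW x(1,2,3)])
  next
    case 2
    then show ?thesis by (rule adj_t[OF yW x'(1,2) x't])
  next
    case 3
    \<comment> \<open>then \<open>u, x, x', y\<close> would induce a paw\<close>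
    then show ?thesis using paw_freeD[OF pf sg u x(1) x'(1) yW(1) x(2) x'(2) yW(2) x'(3)] by blast
  qed
qed

lemma paw_free_second_neighbours_indep:
  assumes sg: "simple_graph W E" and pf: "paw_free W E"
    and u: "u \<in> W" and triangle: "d \<in> W" "e \<in> W" "E u d" "E u e" "E d e"
    and t: "t \<in> second_neighbours W E u" and t': "t' \<in> second_neighbours W E u"
  shows "\<not> E t t'"
proof
  assume "E t t'"
  have d: "d \<in> neighbours W E u" using triangle unfolding neighbours_def by simp
  have W: "t \<in> W" "t' \<in> W" "\<not> E t u" "\<not> E t' u"
    using t t' simple_graph_sym[OF sg _ u] unfolding second_neighbours_def neighbours_def by auto
  \<comment> \<open>otherwise \<open>d, t, t', u\<close> induce a paw\<close>
  show False
    using paw_freeD[OF pf sg triangle(1) W(1,2) u paw_free_second_neighbour_adj_all[OF sg pf u triangle t d]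
        paw_free_second_neighbour_adj_all[OF sg pf u triangle t' d] simple_graph_sym[OF sg u triangle(1,3)]
        \<open>E t t'\<close>] W(3,4) by blast
qed

lemma paw_free_triangle_ball_no_edges_leaving:
  assumes sg: "simple_graph W E" and pf: "paw_free W E"
    and u: "u \<in> W" and triangle: "d \<in> W" "e \<in> W" "E u d" "E u e" "E d e"
  shows "no_edges_leaving W E (insert u (neighbours W E u \<union> second_neighbours W E u))"
  unfolding no_edges_leaving_def
proof (intro ballI notI)
  fix x s
  assume x: "x \<in> insert u (neighbours W E u \<union> second_neighbours W E u)"
    and s: "s \<in> W - insert u (neighbours W E u \<union> second_neighbours W E u)" and "E x s"
  then consider "x = u" | "x \<in> neighbours W E u" | "x \<in> second_neighbours W E u" by blast
  then show False
  proof cases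
    case 3
    have de: "d \<in> neighbours W E u" "e \<in> neighbours W E u" using triangle unfolding neighbours_def by auto
    have xW: "x \<in> W" using 3 unfolding second_neighbours_def by blast
    have "E x d" "E x e"
      using paw_free_second_neighbour_adj_all[OF sg pf u triangle 3] de
        simple_graph_sym[OF sg triangle(1) xW] simple_graph_sym[OF sg triangle(2) xW] by blast+
    \<comment> \<open>otherwise \<open>x, d, e, s\<close> induce a paw\<close>
    then have "E d s \<or> E e s"
      using paw_freeD[OF pf sg xW triangle(1,2)] s \<open>E x s\<close> triangle(5) by blast
    then show False using s de unfolding second_neighbours_def by blast
  qed (use s \<open>E x s\<close> in \<open>auto simp: neighbours_def second_neighbours_def\<close>)
qed

lemma paw_free_triangle_ball_colourable:
  assumes sg: "simple_graph W E" and pf: "paw_free W E" and cb: "clique_bounded W E (Suc k)"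
    and u: "u \<in> W" and triangle: "d \<in> W" "e \<in> W" "E u d" "E u e" "E d e"
  shows "colourable (insert u (neighbours W E u \<union> second_neighbours W E u)) E (Suc k)"
proof -
  let ?N = "neighbours W E u" and ?N2 = "second_neighbours W E u"
  have "colourable ?N E k"
  proof (rule colourable_if_vertices_dominate_edges)
    show "simple_graph ?N E" by (rule simple_graph_subset[OF sg]) (auto simp: neighbours_def)
    show "clique_bounded ?N E k" by (rule clique_bounded_neighbours[OF sg cb u])
    fix a b c assume "a \<in> ?N" "b \<in> ?N" "c \<in> ?N" "E b c"
    then have W: "a \<in> W" "b \<in> W" "c \<in> W" and adj: "E u a" "E u b" "E u c"
      unfolding neighbours_def by auto
    have "E b a \<or> E c a" by (rule paw_freeD[OF pf sg u W(2,3,1) adj(2,3,1) \<open>E b c\<close>])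
    then show "a = b \<or> a = c \<or> E a b \<or> E a c"
      using simple_graph_sym[OF sg W(2,1)] simple_graph_sym[OF sg W(3,1)] by blast
  qed
  moreover have "colourable (insert u ?N2) E 1"
  proof (rule colourable_independent)
    show "\<forall>x\<in>insert u ?N2. \<forall>y\<in>insert u ?N2. \<not> E x y"
      using paw_free_second_neighbours_indep[OF sg pf u triangle] simple_graph_irrefl[OF sg u]
        simple_graph_sym[OF sg _ u]
      unfolding second_neighbours_def neighbours_def by blast
  qed simp
  ultimately have "colourable (?N \<union> insert u ?N2) E (k + 1)" by (rule colourable_Un)
  moreover have "?N \<union> insert u ?N2 = insert u (?N \<union> ?N2)" by blast
  ultimately show ?thesis by simp
qed

lemma paw_free_triangle_covered_colourable:
  assumes "simple_graph W E" "paw_free W E" "clique_bounded W E k"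
    and "\<forall>x\<in>W. \<exists>p\<in>W. \<exists>q\<in>W. E x p \<and> E x q \<and> E p q"
  shows "colourable W E k"
  using assms
proof (induction "card W" arbitrary: W rule: less_induct)
  case less
  show ?case
  proof (cases "W = {}")
    case True
    then show ?thesis by (simp add: colourable_empty)
  next
    case False
    then obtain u where u: "u \<in> W" by blast
    then obtain d e where de: "d \<in> W" "e \<in> W" "E u d" "E u e" "E d e" using less.prems(4) by blast
    then have "3 \<le> k" by (rule clique_bounded_triangle[OF less.prems(1,3) u])
    then obtain k' where k: "k = Suc k'" using not0_implies_Suc by fastforce
    let ?C = "insert u (neighbours W E u \<union> second_neighbours W E u)"
    have CW: "?C \<subseteq> W" using u unfolding neighbours_def second_neighbours_def by auto
    have closed: "no_edges_leaving W E ?C"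
      by (rule paw_free_triangle_ball_no_edges_leaving[OF less.prems(1,2) u de])
    have "colourable (W - ?C) E k"
    proof (rule less.hyps)
      show "card (W - ?C) < card W"
        using less.prems(1) u by (intro psubset_card_mono) (auto simp: simple_graph_def)
      show "simple_graph (W - ?C) E" using less.prems(1) by (rule simple_graph_subset) blast
      show "paw_free (W - ?C) E" using less.prems(2) has_induced_mono[of "W - ?C"] by blast
      show "clique_bounded (W - ?C) E k" using less.prems(3) by (rule clique_bounded_subset) blast
      show "\<forall>x\<in>W - ?C. \<exists>p\<in>W - ?C. \<exists>q\<in>W - ?C. E x p \<and> E x q \<and> E p q"
      proof
        fix x assume x: "x \<in> W - ?C"
        then obtain p q where pq: "p \<in> W" "q \<in> W" "E x p" "E x q" "E p q" using less.prems(4) by blast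
        have "p \<notin> ?C" "q \<notin> ?C"
          using closed x simple_graph_sym[OF less.prems(1) _ pq(1) pq(3)]
            simple_graph_sym[OF less.prems(1) _ pq(2) pq(4)]
          unfolding no_edges_leaving_def by blast+
        then show "\<exists>p\<in>W - ?C. \<exists>q\<in>W - ?C. E x p \<and> E x q \<and> E p q" using pq by blast
      qed
    qed
    moreover have "colourable ?C E k"
      unfolding k by (rule paw_free_triangle_ball_colourable[OF less.prems(1,2) less.prems(3)[unfolded k] u de])
    ultimately show ?thesis using colourable_Diff_no_edges_leaving[OF less.prems(1) CW closed] by blast
  qed
qed

lemma paw_free_fork_free_colourable:
  assumes sg: "simple_graph W E" and pf: "paw_free W E" and ff: "fork_free W E"
    and cb: "clique_bounded W E k" and k: "3 \<le> k"
  shows "colourable W E k"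
proof -
  define T where "T = {x\<in>W. \<not> (\<exists>p\<in>W. \<exists>q\<in>W. E x p \<and> E x q \<and> E p q)}"
  have TW: "T \<subseteq> W" unfolding T_def by blast
  have closed: "no_edges_leaving W E T"
    unfolding no_edges_leaving_def
  proof (intro ballI notI)
    fix x s assume x: "x \<in> T" and s: "s \<in> W - T" and "E x s"
    then obtain p q where pq: "p \<in> W" "q \<in> W" "E s p" "E s q" "E p q" unfolding T_def by blast
    have xs: "x \<in> W" "s \<in> W" using x s TW by auto
    have "E p x \<or> E q x"
      by (rule paw_freeD[OF pf sg xs(2) pq(1,2) xs(1) pq(3,4) simple_graph_sym[OF sg xs \<open>E x s\<close>] pq(5)])
    then show False
      using x xs pq(1-4) \<open>E x s\<close> simple_graph_sym[OF sg pq(1) xs(1)] simple_graph_sym[OF sg pq(2) xs(1)]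
      unfolding T_def by blast
  qed
  have "colourable T E 3"
  proof (rule fork_free_triangle_free_3_colourable)
    show "simple_graph T E" using sg TW by (rule simple_graph_subset)
    show "fork_free T E" using ff has_induced_mono TW by blast
    show "triangle_free T E" unfolding triangle_free_def T_def by blast
  qed
  then have "colourable T E k" using k by (rule colourable_mono)
  moreover have "colourable (W - T) E k"
  proof (rule paw_free_triangle_covered_colourable)
    show "simple_graph (W - T) E" using sg by (rule simple_graph_subset) blast
    show "paw_free (W - T) E" using pf has_induced_mono[of "W - T"] by blast
    show "clique_bounded (W - T) E k" using cb by (rule clique_bounded_subset) blast
    show "\<forall>x\<in>W - T. \<exists>p\<in>W - T. \<exists>q\<in>W - T. E x p \<and> E x q \<and> E p q"
    proof
      fix x assume x: "x \<in> W - T"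
      then obtain p q where pq: "p \<in> W" "q \<in> W" "E x p" "E x q" "E p q" unfolding T_def by blast
      have "p \<notin> T" "q \<notin> T"
        using closed x simple_graph_sym[OF sg _ pq(1) pq(3)] simple_graph_sym[OF sg _ pq(2) pq(4)]
        unfolding no_edges_leaving_def by blast+
      then show "\<exists>p\<in>W - T. \<exists>q\<in>W - T. E x p \<and> E x q \<and> E p q" using pq by blast
    qed
  qed
  ultimately show ?thesis by (rule colourable_Diff_no_edges_leaving[OF sg TW closed])
qed

lemma fork_free_colourable_Suc_choose_2:
  assumes "simple_graph W E" "fork_free W E" "\<forall>v\<in>W. paw_free (non_neighbours W E v) E"
    and "clique_bounded W E w"
  shows "colourable W E (Suc w choose 2)"
  using assms
proof (induction w arbitrary: W)
  case 0
  then show ?case using clique_bounded_0_empty colourable_empty by metis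
next
  case (Suc w)
  consider "w = 0" | "w = 1" | "2 \<le> w" by linarith
  then show ?case
  proof cases
    case 1
    then have "\<forall>x\<in>W. \<forall>y\<in>W. \<not> E x y" using clique_bounded_edge[OF Suc.prems(1,4)] by fastforce
    then show ?thesis using 1 by (intro colourable_independent) simp_all
  next
    case 2
    then have "triangle_free W E"
      using triangle_free_if_clique_bounded_2[OF Suc.prems(1)] Suc.prems(4) by (simp add: numeral_2_eq_2)
    then have "colourable W E 3" using fork_free_triangle_free_3_colourable Suc.prems(1,2) by blast
    then show ?thesis using 2 by (simp add: numeral_eq_Suc)
  next
    case 3
    show ?thesis
    proof (cases "W = {}")
      case True
      then show ?thesis by (simp add: colourable_empty)
    next
      case False
      then obtain v where v: "v \<in> W" by blast
      have NW: "neighbours W E v \<subseteq> W" and MW: "non_neighbours W E v \<subseteq> W"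
        unfolding neighbours_def non_neighbours_def by auto
      have "colourable (neighbours W E v) E (Suc w choose 2)"
      proof (rule Suc.IH)
        show "simple_graph (neighbours W E v) E" using Suc.prems(1) NW by (rule simple_graph_subset)
        show "fork_free (neighbours W E v) E" using Suc.prems(2) has_induced_mono NW by blast
        show "\<forall>x\<in>neighbours W E v. paw_free (non_neighbours (neighbours W E v) E x) E"
          using Suc.prems(3) has_induced_mono non_neighbours_mono[OF NW] NW by blast
        show "clique_bounded (neighbours W E v) E w" by (rule clique_bounded_neighbours[OF Suc.prems(1,4) v])
      qed
      moreover have "colourable (non_neighbours W E v) E (Suc w)"
      proof (rule paw_free_fork_free_colourable)
        show "simple_graph (non_neighbours W E v) E" using Suc.prems(1) MW by (rule simple_graph_subset)
        show "paw_free (non_neighbours W E v) E" using Suc.prems(3) v by blast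
        show "fork_free (non_neighbours W E v) E" using Suc.prems(2) has_induced_mono MW by blast
        show "clique_bounded (non_neighbours W E v) E (Suc w)" using Suc.prems(4) MW by (rule clique_bounded_subset)
      qed (use 3 in simp)
      ultimately have "colourable W E ((Suc w choose 2) + Suc w)"
        by (rule colourable_neighbours_Un_non_neighbours[OF Suc.prems(1) v]) simp
      then show ?thesis by (simp add: numeral_2_eq_2 add.commute)
    qed
  qed
qed

lemma clique_bounded_clique_number:
  assumes "finite V" shows "clique_bounded V E (clique_number V E)"
  unfolding clique_bounded_def clique_number_def
proof (intro allI impI)
  fix K assume "is_clique V E K"
  moreover have "finite {K. is_clique V E K}"
    using assms by (rule finite_subset[rotated, OF finite_Pow_iff[THEN iffD2]]) (auto simp: is_clique_def)
  ultimately show "card K \<le> Max (card ` {K. is_clique V E K})" by (intro Max_ge) auto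
qed

theorem corollary3p10:
  fixes V :: "'a set" and E :: "'a \<Rightarrow> 'a \<Rightarrow> bool"
  assumes "simple_graph V E"
    and "\<not> has_induced V E 5 fork_adj"
    and "\<not> has_induced V E 5 codart_adj"
  shows "chromatic_number V E \<le> (clique_number V E + 1) choose 2"
proof -
  have "clique_bounded V E (clique_number V E)"
    using assms(1) clique_bounded_clique_number unfolding simple_graph_def by blast
  then have "colourable V E (Suc (clique_number V E) choose 2)"
    using fork_free_colourable_Suc_choose_2[OF assms(1,2)]
      codart_free_imp_paw_free_non_neighbours[OF assms(1,3)] by blast
  then show ?thesis unfolding colourable_def chromatic_number_def by (simp add: Least_le)
qed

end
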